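(* The polynomials $a_0,\Delta,\beta,\gamma_0$ satisfy $$\beta^2=a_0^q\gamma_0+\Delta\left(\Delta^{\frac{q-1}{2}}-a_0^{q-1}\right)^2.$$
   Context: Let $p>2$ be a prime, $q=p^n$, and $\mathbb{F}$ a field of characteristic $p$ containing $\mathbb{F}_q$. In $\mathbb{F}[a_0,a_1,a_2]$ define $\Delta=a_1^2-a_0a_2$, $\beta=\prod_{c\in\mathbb{F}_q}(a_1+ca_0)=a_1^q-a_0^{q-1}a_1$, and $\gamma_0=\prod_{c\in\mathbb{F}_q}(a_2+2ca_1+c^2a_0)$. *)

theory Defs
  imports "HOL-Computational_Algebra.Polynomial"
begin

text \<open>The trivariate polynomial ring F[a0,a1,a2] is modelled as the iterated
univariate ring ((F[a0])[a1])[a2], i.e. the type 'a poly poly poly.\<close>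

definition cst3 :: "'a::comm_ring_1 \<Rightarrow> 'a poly poly poly" where
  "cst3 c = [:[:[:c:]:]:]"

definition var_a0 :: "'a::comm_ring_1 poly poly poly" where
  "var_a0 = [:[:[:0, 1:]:]:]"

definition var_a1 :: "'a::comm_ring_1 poly poly poly" where
  "var_a1 = [:[:0, 1:]:]"

definition var_a2 :: "'a::comm_ring_1 poly poly poly" where
  "var_a2 = [:0, 1:]"

text \<open>The copy of F_q inside F: the roots of X^q - X.\<close>
definition Fq :: "nat \<Rightarrow> 'a::field set" where
  "Fq q = {c. c ^ q = c}"

definition Delta :: "'a::comm_ring_1 poly poly poly" where
  "Delta = var_a1 ^ 2 - var_a0 * var_a2"

definition beta :: "nat \<Rightarrow> 'a::field poly poly poly" where
  "beta q = (\<Prod>c\<in>Fq q. var_a1 + cst3 c * var_a0)"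

definition gamma0 :: "nat \<Rightarrow> 'a::field poly poly poly" where
  "gamma0 q = (\<Prod>c\<in>Fq q. var_a2 + cst3 (2 * c) * var_a1 + cst3 (c ^ 2) * var_a0)"

end

theory Submission
  imports Defs "HOL-Computational_Algebra.Primes"
begin

text \<open>
  For z \<noteq> 0 the q elements c z (c \<in> F_q) are exactly the roots of X^q - z^(q-1) X, so
  \<Prod>c (X - c z) = X^q - z^(q-1) X.  In characteristic p this polynomial is additive, hence
  \<Prod>c (X + t - c z) = X^q - z^(q-1) X + (t^q - z^(q-1) t).  For u_c = a1 + c a0 this gives
  \<Prod>c (X \<plusminus> u_c) = f(X) \<plusminus> \<beta> with the odd polynomial f = X^q - a0^(q-1) X = X g(X^2), so
  \<Prod>c (X^2 - u_c^2) = X^2 g(X^2)^2 - \<beta>^2.  Both sides are polynomials in Y = X^2; substituting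
  Y = \<Delta> and using \<Delta> - u_c^2 = -a0 (a2 + 2 c a1 + c^2 a0) gives the identity.
\<close>

lemma pcompose_power: "pcompose (p ^ k) r = pcompose p r ^ k"
  for p r :: "'a::comm_ring_1 poly"
  by (induction k) (simp_all add: pcompose_mult pcompose_1)

lemma prod_linear_factors_scaled_fixed_points:
  fixes S :: "'r::idom set" and z :: 'r
  assumes "finite S" "card S = q" "q \<ge> 2" "\<And>s. s \<in> S \<Longrightarrow> s ^ q = s"
  shows "(\<Prod>s\<in>S. [:- (s * z), 1:]) = [:0, 1:] ^ q - [:z ^ (q - 1):] * [:0, 1:]"
proof (cases "z = 0")
  case True
  then show ?thesis
    using assms(1-3) by simp
next
  case False
  let ?P = "\<Prod>s\<in>S. [:- (s * z), 1:]" and ?Q = "[:0, 1:] ^ q - [:z ^ (q - 1):] * [:0, 1:]"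
  have deg_P: "degree ?P = q"
    using assms(1,2) by (simp add: degree_prod_eq_sum_degree)
  have lc_P: "coeff ?P q = 1"
    using deg_P by (simp flip: deg_P add: lead_coeff_prod)
  have deg_Q: "degree ?Q \<le> q"
    using assms(3) by (intro degree_diff_le)
      (auto simp: degree_linear_power intro: order.trans[OF degree_mult_le])
  have coeff_Q: "coeff ?Q q = 1"
    using assms(3) by (simp add: coeff_linear_power coeff_pCons split: nat.split)
  show ?thesis
  proof (rule poly_eqI_degree_lead_coeff[where A = "(\<lambda>s. s * z) ` S" and n = q])
    show "q \<le> card ((\<lambda>s. s * z) ` S)"
      using assms(2) False by (subst card_image) (auto intro: inj_onI)
    fix x assume "x \<in> (\<lambda>s. s * z) ` S"
    then obtain s where s: "s \<in> S" "x = s * z" by blast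
    have "z ^ (q - 1) * z = z ^ q"
      using assms(3) by (simp flip: power_Suc2)
    then have "poly ?Q x = 0"
      using s assms(4)[OF s(1)] by (simp add: power_mult_distrib algebra_simps)
    moreover have "poly ?P x = 0"
      using s assms(1) by (auto simp: poly_prod prod_zero_iff)
    ultimately show "poly ?P x = poly ?Q x" by simp
  qed (use deg_P lc_P deg_Q coeff_Q in auto)
qed

lemma pcompose_additive_polynomial_shift:
  fixes t w :: "'r::comm_ring_1"
  assumes "prime CHAR('r)" "q = CHAR('r) ^ k"
  shows "pcompose ([:0, 1:] ^ q - [:w:] * [:0, 1:]) [:t, 1:]
           = [:0, 1:] ^ q - [:w:] * [:0, 1:] + [:t ^ q - w * t:]"
proof -
  have "[:t, 1:] ^ q = ([:t:] + [:0, 1:]) ^ q"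
    by simp
  also have "\<dots> = [:t:] ^ q + [:0, 1:] ^ q"
    by (rule freshmans_dream') (use assms in simp_all)
  finally show ?thesis
    by (simp add: pcompose_diff pcompose_mult pcompose_power pcompose_pCons poly_const_pow algebra_simps)
qed

lemma prod_shifted_linear_factors_fixed_points:
  fixes S :: "'r::idom set" and t z :: 'r
  assumes "prime CHAR('r)" "q = CHAR('r) ^ k"
    and "finite S" "card S = q" "q \<ge> 2" "\<And>s. s \<in> S \<Longrightarrow> s ^ q = s"
  shows "(\<Prod>s\<in>S. [:t - s * z, 1:])
           = [:0, 1:] ^ q - [:z ^ (q - 1):] * [:0, 1:] + [:t ^ q - z ^ (q - 1) * t:]"
proof -
  have "(\<Prod>s\<in>S. [:t - s * z, 1:]) = pcompose (\<Prod>s\<in>S. [:- (s * z), 1:]) [:t, 1:]"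
    by (simp add: pcompose_prod pcompose_pCons)
  also have "\<dots> = pcompose ([:0, 1:] ^ q - [:z ^ (q - 1):] * [:0, 1:]) [:t, 1:]"
    using assms(3-6) by (simp add: prod_linear_factors_scaled_fixed_points)
  also have "\<dots> = [:0, 1:] ^ q - [:z ^ (q - 1):] * [:0, 1:] + [:t ^ q - z ^ (q - 1) * t:]"
    by (rule pcompose_additive_polynomial_shift[OF assms(1,2)])
  finally show ?thesis .
qed

lemma pcompose_prod_linear_factors_squares:
  fixes u :: "'i \<Rightarrow> 'r::comm_ring_1"
  shows "pcompose (\<Prod>i\<in>I. [:- (u i ^ 2), 1:]) [:0, 0, 1:]
           = (\<Prod>i\<in>I. [:u i, 1:]) * (\<Prod>i\<in>I. [:- u i, 1:])"
  by (simp add: pcompose_prod pcompose_pCons flip: prod.distrib)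
     (rule prod.cong, simp_all add: power2_eq_square)

lemma prod_diff_squares_from_linear_products:
  fixes u :: "'i \<Rightarrow> 'r::idom" and g :: "'r poly"
  assumes "(\<Prod>i\<in>I. [:u i, 1:]) = [:0, 1:] * pcompose g [:0, 0, 1:] + [:b:]"
    and "(\<Prod>i\<in>I. [:- u i, 1:]) = [:0, 1:] * pcompose g [:0, 0, 1:] - [:b:]"
  shows "(\<Prod>i\<in>I. x - u i ^ 2) = x * poly g x ^ 2 - b ^ 2"
proof -
  let ?P = "\<Prod>i\<in>I. [:- (u i ^ 2), 1:]" and ?Q = "[:0, 1:] * g ^ 2 - [:b ^ 2:]"
  define h where "h = pcompose g [:0, 0, 1:]"
  have "pcompose ?P [:0, 0, 1:] = ([:0, 1:] * h + [:b:]) * ([:0, 1:] * h - [:b:])"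
    unfolding pcompose_prod_linear_factors_squares assms h_def ..
  also have "\<dots> = ([:0, 1:] * [:0, 1:]) * h ^ 2 - [:b:] * [:b:]"
    by (simp only: algebra_simps power2_eq_square)
  also have "\<dots> = pcompose ?Q [:0, 0, 1:]"
    by (simp add: h_def pcompose_diff pcompose_mult pcompose_power pcompose_pCons power2_eq_square)
  finally have "?P = ?Q"
    using pcompose_eq_0[of "?P - ?Q" "[:0, 0, 1:]"] by (simp add: pcompose_diff)
  then have "poly ?P x = poly ?Q x"
    by simp
  then show ?thesis
    by (simp add: poly_prod)
qed

lemma inj_cst3: "inj cst3"
  by (rule injI) (simp add: cst3_def)

lemma cst3_power: "cst3 a ^ k = cst3 (a ^ k)"
  by (simp add: cst3_def poly_const_pow)

lemma cst3_add: "cst3 (a + b) = cst3 a + cst3 b"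
  by (simp add: cst3_def)

lemma cst3_Fq_fixed_points: "s \<in> cst3 ` Fq q \<Longrightarrow> s ^ q = s"
  by (auto simp: cst3_power Fq_def)

lemma beta_eq_prod_cst3: "beta q = (\<Prod>s\<in>cst3 ` Fq q. var_a1 - s * (- var_a0))"
  by (simp add: beta_def prod.reindex inj_on_subset[OF inj_cst3])

lemma prod_Delta_diff_squares_eq_gamma0:
  assumes "finite (Fq q :: 'a::field set)"
  shows "(\<Prod>s\<in>cst3 ` Fq q. Delta - (var_a1 + s * var_a0) ^ 2)
           = (- var_a0) ^ card (Fq q :: 'a set) * (gamma0 q :: 'a poly poly poly)"
proof -
  have factor: "Delta - (var_a1 + cst3 c * var_a0) ^ 2
          = - var_a0 * (var_a2 + cst3 (2 * c) * var_a1 + cst3 (c ^ 2) * var_a0)" for c :: 'a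
    unfolding Delta_def cst3_power[symmetric] mult_2 cst3_add by algebra
  have "(\<Prod>s\<in>cst3 ` Fq q. Delta - (var_a1 + s * var_a0) ^ 2)
          = (\<Prod>c::'a\<in>Fq q. - var_a0 * (var_a2 + cst3 (2 * c) * var_a1 + cst3 (c ^ 2) * var_a0))"
    by (simp only: prod.reindex inj_on_subset[OF inj_cst3] subset_UNIV comp_def factor)
  also have "\<dots> = (\<Prod>c::'a\<in>Fq q. - var_a0) * gamma0 q"
    unfolding gamma0_def by (simp only: prod.distrib)
  finally show ?thesis
    using assms by simp
qed

lemma prod_cst3_Fq_shifted_linear_factors:
  fixes t z :: "'a::field poly poly poly"
  assumes "prime CHAR('a)" "q = CHAR('a) ^ k" "q \<ge> 2" "card (Fq q :: 'a set) = q"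
  shows "(\<Prod>s\<in>cst3 ` Fq q. [:t - s * z, 1:])
           = [:0, 1:] ^ q - [:z ^ (q - 1):] * [:0, 1:] + [:t ^ q - z ^ (q - 1) * t:]"
proof (rule prod_shifted_linear_factors_fixed_points)
  show "finite (cst3 ` Fq q :: 'a poly poly poly set)"
    using assms(3,4) card.infinite by fastforce
qed (use assms in \<open>simp_all add: cst3_Fq_fixed_points card_image inj_on_subset[OF inj_cst3]\<close>)

lemma beta_eq:
  assumes "prime CHAR('a)" "q = CHAR('a) ^ k" "q \<ge> 2" "card (Fq q :: 'a set) = q" "odd q"
  shows "(beta q :: 'a::field poly poly poly) = var_a1 ^ q - var_a0 ^ (q - 1) * var_a1"
proof -
  have "beta q = poly (\<Prod>s\<in>cst3 ` Fq q. [:var_a1 - s * (- var_a0), 1:]) (0 :: 'a poly poly poly)"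
    by (simp add: beta_eq_prod_cst3 poly_prod)
  also have "\<dots> = var_a1 ^ q - var_a0 ^ (q - 1) * var_a1"
    unfolding prod_cst3_Fq_shifted_linear_factors[OF assms(1-4)]
    using assms(3,5) by (simp add: power_minus_even)
  finally show ?thesis .
qed

lemma prod_Delta_diff_squares_eq_beta:
  assumes "prime CHAR('a)" "q = CHAR('a) ^ k" "q \<ge> 2" "card (Fq q :: 'a set) = q" "q = 2 * m + 1"
  shows "(\<Prod>s\<in>cst3 ` Fq q. Delta - (var_a1 + s * var_a0) ^ 2)
           = Delta * (Delta ^ m - var_a0 ^ (q - 1)) ^ 2 - (beta q :: 'a::field poly poly poly) ^ 2"
proof -
  define A :: "'a poly poly poly" where "A = var_a0 ^ (q - 1)"
  define g :: "'a poly poly poly poly" where "g = [:0, 1:] ^ m - [:A:]"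
  note shifted = prod_cst3_Fq_shifted_linear_factors[OF assms(1-4)]
  have "odd q"
    using assms(5) by simp
  note beta = beta_eq[OF assms(1-4) this, folded A_def]
  have "pcompose g [:0, 0, 1:] = [:0, 1:] ^ (2 * m) - [:A:]"
    by (simp add: g_def pcompose_diff pcompose_power pcompose_pCons power_mult power2_eq_square)
  then have odd_part: "[:0, 1:] ^ q - [:A:] * [:0, 1:] = [:0, 1:] * pcompose g [:0, 0, 1:]"
    by (simp add: assms(5) algebra_simps)
  have neg_a0: "(- var_a0) ^ (q - 1) = A"
    by (simp add: A_def assms(5))
  have "(\<Prod>s\<in>cst3 ` Fq q. [:var_a1 + s * var_a0, 1:])
          = [:0, 1:] * pcompose g [:0, 0, 1:] + [:beta q:]"
    using shifted[of var_a1 "- var_a0"] unfolding neg_a0 odd_part beta[symmetric] by simp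
  moreover have "(\<Prod>s\<in>cst3 ` Fq q. [:- (var_a1 + s * var_a0), 1:])
                   = [:0, 1:] * pcompose g [:0, 0, 1:] - [:beta q:]"
    using shifted[of "- var_a1" var_a0] \<open>odd q\<close>
    unfolding A_def[symmetric] odd_part by (simp add: beta power_minus_odd)
  ultimately show ?thesis
    by (simp add: prod_diff_squares_from_linear_products g_def A_def)
qed

theorem lemma2p2:
  fixes p n q :: nat
  assumes "prime p" and "p > 2" and "n \<ge> 1" and "q = p ^ n"
    and "CHAR('a::field) = p"
    and "card (Fq q :: 'a set) = q"
  shows "(beta q :: 'a poly poly poly) ^ 2
           = var_a0 ^ q * gamma0 q
             + Delta * (Delta ^ ((q - 1) div 2) - var_a0 ^ (q - 1)) ^ 2"
proof -
  have "odd q" "q \<ge> 2"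
    using assms(1-4) prime_odd_nat[of p] by (auto intro: order.trans[OF _ power_increasing[of 1 n p]])
  then obtain m where q: "q = 2 * m + 1"
    by (elim oddE)
  have char: "prime CHAR('a)" "q = CHAR('a) ^ n"
    using assms(1,4,5) by simp_all
  have "finite (Fq q :: 'a set)"
    using assms(6) \<open>q \<ge> 2\<close> card.infinite by fastforce
  from prod_Delta_diff_squares_eq_gamma0[OF this]
    and prod_Delta_diff_squares_eq_beta[OF char \<open>q \<ge> 2\<close> assms(6) q]
  have "- (var_a0 ^ q * gamma0 q)
          = Delta * (Delta ^ m - var_a0 ^ (q - 1)) ^ 2 - (beta q :: 'a poly poly poly) ^ 2"
    using assms(6) \<open>odd q\<close> by (simp add: power_minus_odd)
  moreover have "(q - 1) div 2 = m"
    by (simp add: q)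
  ultimately show ?thesis
    by (simp add: algebra_simps)
qed

end
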